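(* Let $G$ be a digraph with at least one arc, and let $d(G)$ and $d(LG)$ denote the inner diameters of $G$ and of its line digraph $LG$. Then $$d(G)-1\le d(LG)\le d(G)+1.$$
   Context: Digraphs are finite and may have loops and multiple arcs. $\mathrm{dist}_G(u,v)$ is the length of a shortest directed walk from $u$ to $v$ ($\infty$ if none; $\mathrm{dist}_G(u,u)=0$). The inner diameter of $G$ is $d(G)=\max\{\mathrm{dist}_G(u,v): u,v\in V(G),\ \mathrm{dist}_G(u,v)<\infty\}$. The line digraph $LG$ has as vertex set the set of arcs of $G$, with an arc from $e$ to $f$ whenever the head of $e$ equals the tail of $f$. *)

theory Defs
  imports "Graph_Theory.Graph_Theory" "HOL-Library.Extended_Nat"
begin

text \<open>Digraphs (with loops and multiple arcs allowed) are the records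
  of Graph_Theory (verts, arcs, tail, head), subject to fin_digraph.\<close>

text \<open>Distance: length of a shortest directed walk, infinity if none
  (the infimum over the empty set of enat is infinity).\<close>
definition walk_dist :: "('a,'b) pre_digraph \<Rightarrow> 'a \<Rightarrow> 'a \<Rightarrow> enat" where
  "walk_dist G u v = (INF p\<in>{p. pre_digraph.awalk G u p v}. enat (length p))"

definition inner_diameter :: "('a,'b) pre_digraph \<Rightarrow> nat" where
  "inner_diameter G = Max {the_enat (walk_dist G u v) | u v.
      u \<in> verts G \<and> v \<in> verts G \<and> walk_dist G u v < \<infinity>}"

definition line_digraph :: "('a,'b) pre_digraph \<Rightarrow> ('b, 'b \<times> 'b) pre_digraph" where
  "line_digraph G = \<lparr> verts = arcs G,
     arcs = {(e, f). e \<in> arcs G \<and> f \<in> arcs G \<and> head G e = tail G f},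
     tail = fst, head = snd \<rparr>"

end

theory Submission
  imports Defs
begin

text \<open>A walk of length \<open>k \<ge> 1\<close> from \<open>e\<close> to \<open>f\<close> in \<open>LG\<close> is a sequence of \<open>k + 1\<close>
  consecutive arcs of \<open>G\<close>; dropping its first and last arc leaves a walk of length \<open>k - 1\<close>
  from the head of \<open>e\<close> to the tail of \<open>f\<close>. Hence for distinct arcs
  \<open>dist_LG(e,f) = dist_G(head e, tail f) + 1\<close>, and every finite distance of \<open>LG\<close> is at most
  \<open>d(G) + 1\<close>. Conversely a diametral shortest walk of \<open>G\<close> of length at least 2 starts with
  an arc \<open>a\<close> and ends with an arc \<open>b \<noteq> a\<close>, and its length is at most
  \<open>dist_G(head a, tail b) + 2 = dist_LG(a,b) + 1 \<le> d(LG) + 1\<close>.\<close>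

lemma walk_dist_le_length:
  "pre_digraph.awalk G u p v \<Longrightarrow> walk_dist G u v \<le> enat (length p)"
  unfolding walk_dist_def by (rule INF_lower) auto

lemma obtain_shortest_awalk:
  assumes "walk_dist G u v < \<infinity>"
  obtains p where "pre_digraph.awalk G u p v" "walk_dist G u v = enat (length p)"
proof -
  let ?S = "(\<lambda>p. enat (length p)) ` {p. pre_digraph.awalk G u p v}"
  have dist: "walk_dist G u v = Inf ?S" unfolding walk_dist_def by simp
  have "?S \<noteq> {}" using assms dist unfolding Inf_enat_def by (auto split: if_split_asm)
  then have "Inf ?S \<in> ?S" by (blast intro: wellorder_InfI)
  then show ?thesis using dist that by auto
qed

lemma walk_dist_self:
  "u \<in> verts G \<Longrightarrow> walk_dist G u u = 0"
  using walk_dist_le_length[of G u "[]" u]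
  by (simp add: pre_digraph.awalk_def pre_digraph.cas.simps zero_enat_def[symmetric])

lemma finite_walk_dists:
  assumes "finite (verts H)"
  shows "finite {the_enat (walk_dist H u v) | u v.
      u \<in> verts H \<and> v \<in> verts H \<and> walk_dist H u v < \<infinity>}"
proof -
  have "{the_enat (walk_dist H u v) | u v.
      u \<in> verts H \<and> v \<in> verts H \<and> walk_dist H u v < \<infinity>}
      \<subseteq> (\<lambda>(u, v). the_enat (walk_dist H u v)) ` (verts H \<times> verts H)" by auto
  then show ?thesis using assms by (meson finite_SigmaI finite_imageI finite_subset)
qed

lemma walk_dist_le_inner_diameter:
  assumes "finite (verts H)" "u \<in> verts H" "v \<in> verts H" "walk_dist H u v = enat k"
  shows "k \<le> inner_diameter H"
  unfolding inner_diameter_def using finite_walk_dists[OF assms(1)] assms(2-4)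
  by (intro Max_ge) force+

lemma inner_diameter_leI:
  assumes "finite (verts H)" "verts H \<noteq> {}"
    and "\<And>u v k. u \<in> verts H \<Longrightarrow> v \<in> verts H \<Longrightarrow> walk_dist H u v = enat k \<Longrightarrow> k \<le> N"
  shows "inner_diameter H \<le> N"
proof -
  obtain w where "w \<in> verts H" using assms(2) by auto
  then have "walk_dist H w w < \<infinity>" by (simp add: walk_dist_self)
  then show ?thesis unfolding inner_diameter_def
    using finite_walk_dists[OF assms(1)] assms(3) \<open>w \<in> verts H\<close>
    by (subst Max_le_iff) (auto elim!: less_infinityE)
qed

lemma obtain_diametral_pair:
  assumes "finite (verts H)" "verts H \<noteq> {}"
  obtains u v where "u \<in> verts H" "v \<in> verts H" "walk_dist H u v = enat (inner_diameter H)"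
proof -
  let ?D = "{the_enat (walk_dist H u v) | u v.
      u \<in> verts H \<and> v \<in> verts H \<and> walk_dist H u v < \<infinity>}"
  obtain w where "w \<in> verts H" using assms(2) by auto
  then have "?D \<noteq> {}" using walk_dist_self[of w H] by force
  then have "inner_diameter H \<in> ?D"
    unfolding inner_diameter_def by (rule Max_in[OF finite_walk_dists[OF assms(1)]])
  then show ?thesis using that by (auto elim!: less_infinityE)
qed

lemma line_digraph_simps [simp]:
  "verts (line_digraph G) = arcs G"
  "arcs (line_digraph G) = {(e, f). e \<in> arcs G \<and> f \<in> arcs G \<and> head G e = tail G f}"
  "tail (line_digraph G) = fst"
  "head (line_digraph G) = snd"
  by (simp_all add: line_digraph_def)

lemma line_digraph_awalk_Nil_iff:
  "pre_digraph.awalk (line_digraph G) e [] f \<longleftrightarrow> e = f \<and> e \<in> arcs G"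
  by (auto simp: pre_digraph.awalk_def pre_digraph.cas.simps)

lemma line_digraph_awalk_Cons_iff:
  "pre_digraph.awalk (line_digraph G) e (x # q) f \<longleftrightarrow>
   (\<exists>b. x = (e, b) \<and> e \<in> arcs G \<and> b \<in> arcs G \<and> head G e = tail G b
     \<and> pre_digraph.awalk (line_digraph G) b q f)"
  by (cases x) (auto simp: pre_digraph.awalk_def pre_digraph.cas.simps)

context wf_digraph
begin

lemma awalk_of_line_digraph_awalk:
  assumes "pre_digraph.awalk (line_digraph G) e q f" "q \<noteq> []"
  shows "\<exists>p. awalk (head G e) p (tail G f) \<and> length p + 1 = length q"
  using assms
proof (induction q arbitrary: e)
  case (Cons x q)
  then obtain b where b: "e \<in> arcs G" "b \<in> arcs G" "head G e = tail G b"
    "pre_digraph.awalk (line_digraph G) b q f"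
    by (auto simp: line_digraph_awalk_Cons_iff)
  show ?case
  proof (cases "q = []")
    case True
    then show ?thesis
      using b by (auto simp: awalk_Nil_iff line_digraph_awalk_Nil_iff)
  next
    case False
    then obtain p where "awalk (head G b) p (tail G f)" "length p + 1 = length q"
      using Cons.IH b(4) by blast
    then show ?thesis using b by (auto simp: awalk_Cons_iff intro!: exI[of _ "b # p"])
  qed
qed simp

lemma line_digraph_awalk_of_awalk:
  assumes "awalk (head G e) p (tail G f)" "e \<in> arcs G" "f \<in> arcs G"
  shows "pre_digraph.awalk (line_digraph G) e (map2 Pair (e # p) (p @ [f])) f"
  using assms
proof (induction p arbitrary: e)
  case Nil
  then show ?case
    by (auto simp: awalk_Nil_iff line_digraph_awalk_Cons_iff line_digraph_awalk_Nil_iff)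
next
  case (Cons a p)
  then show ?case by (auto simp: awalk_Cons_iff line_digraph_awalk_Cons_iff)
qed

lemma walk_dist_line_digraph:
  assumes "e \<in> arcs G" "f \<in> arcs G" "e \<noteq> f"
  shows "walk_dist (line_digraph G) e f = walk_dist G (head G e) (tail G f) + 1"
proof (rule antisym)
  show "walk_dist (line_digraph G) e f \<le> walk_dist G (head G e) (tail G f) + 1"
  proof (cases "walk_dist G (head G e) (tail G f) < \<infinity>")
    case True
    then obtain p where "awalk (head G e) p (tail G f)"
      "walk_dist G (head G e) (tail G f) = enat (length p)"
      by (rule obtain_shortest_awalk)
    then show ?thesis
      using walk_dist_le_length[OF line_digraph_awalk_of_awalk] assms
      by (simp add: eSuc_enat[symmetric] plus_1_eSuc)
  qed simp
next
  show "walk_dist G (head G e) (tail G f) + 1 \<le> walk_dist (line_digraph G) e f"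
  proof (cases "walk_dist (line_digraph G) e f < \<infinity>")
    case True
    then obtain q where q: "pre_digraph.awalk (line_digraph G) e q f"
      "walk_dist (line_digraph G) e f = enat (length q)"
      by (rule obtain_shortest_awalk)
    have "q \<noteq> []" using q(1) assms(3) by (auto simp: line_digraph_awalk_Nil_iff)
    then obtain p where "awalk (head G e) p (tail G f)" "length p + 1 = length q"
      using awalk_of_line_digraph_awalk[OF q(1)] by blast
    then show ?thesis using walk_dist_le_length q(2)
      by (metis add_right_mono one_enat_def plus_enat_simps(1))
  qed simp
qed

lemma walk_dist_tail_head_le:
  assumes "a \<in> arcs G" "b \<in> arcs G"
  shows "walk_dist G (tail G a) (head G b) \<le> walk_dist G (head G a) (tail G b) + 2"
proof (cases "walk_dist G (head G a) (tail G b) < \<infinity>")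
  case True
  then obtain r where r: "awalk (head G a) r (tail G b)"
    "walk_dist G (head G a) (tail G b) = enat (length r)"
    by (rule obtain_shortest_awalk)
  have "awalk (tail G a) ([a] @ r @ [b]) (head G b)"
    using assms r(1) by (intro awalk_appendI[OF arc_implies_awalk]) (simp_all add: arc_implies_awalk)
  then have "walk_dist G (tail G a) (head G b) \<le> enat (length ([a] @ r @ [b]))"
    by (rule walk_dist_le_length)
  also have "\<dots> = walk_dist G (head G a) (tail G b) + 2"
    using r(2) by (simp add: numeral_eq_enat)
  finally show ?thesis .
qed simp

end

context fin_digraph
begin

lemma inner_diameter_line_digraph_le:
  assumes "arcs G \<noteq> {}"
  shows "inner_diameter (line_digraph G) \<le> inner_diameter G + 1"
proof (rule inner_diameter_leI)
  show "finite (verts (line_digraph G))" "verts (line_digraph G) \<noteq> {}"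
    using assms by simp_all
  fix e f k assume e: "e \<in> verts (line_digraph G)" and f: "f \<in> verts (line_digraph G)"
    and k: "walk_dist (line_digraph G) e f = enat k"
  show "k \<le> inner_diameter G + 1"
  proof (cases "e = f")
    case False
    then have "walk_dist G (head G e) (tail G f) + 1 = enat k"
      using walk_dist_line_digraph e f k by simp
    then obtain m where "walk_dist G (head G e) (tail G f) = enat m" "k = m + 1"
      by (cases "walk_dist G (head G e) (tail G f)") (auto simp: one_enat_def)
    then show ?thesis
      using walk_dist_le_inner_diameter[OF finite_verts head_in_verts tail_in_verts] e f by simp
  qed (use k walk_dist_self[of e "line_digraph G"] e in \<open>simp add: enat_0_iff\<close>)
qed

lemma inner_diameter_le_line_digraph:
  assumes "arcs G \<noteq> {}"
  shows "inner_diameter G \<le> inner_diameter (line_digraph G) + 1"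
proof -
  have "verts G \<noteq> {}" using assms tail_in_verts by blast
  then obtain u v where uv: "u \<in> verts G" "v \<in> verts G"
    "walk_dist G u v = enat (inner_diameter G)"
    by (rule obtain_diametral_pair[OF finite_verts])
  have "walk_dist G u v < \<infinity>" using uv(3) by simp
  then obtain p where "awalk u p v" "walk_dist G u v = enat (length p)"
    by (rule obtain_shortest_awalk)
  with uv(3) have p: "awalk u p v" "length p = inner_diameter G" by simp_all
  show ?thesis
  proof (cases "length p \<le> 1")
    case False
    then obtain a q where "p = a # q" "q \<noteq> []" by (cases p) auto
    then obtain r b where p_split: "p = a # r @ [b]" by (metis rev_exhaust)
    with p(1) have a: "a \<in> arcs G" "u = tail G a" and b: "b \<in> arcs G" "v = head G b"
      and r: "awalk (head G a) r (tail G b)"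
      by (auto simp: awalk_Cons_iff awalk_Nil_iff)
    have "a \<noteq> b"
    proof
      assume "a = b"
      then have "awalk u [a] v" using a b by (simp add: awalk_Cons_iff awalk_Nil_iff)
      then have "length p \<le> 1" using walk_dist_le_length[of G u "[a]" v] uv(3) p(2) by simp
      then show False using False by simp
    qed
    have "walk_dist G (head G a) (tail G b) \<le> enat (length r)"
      using r by (rule walk_dist_le_length)
    then obtain m where m: "walk_dist G (head G a) (tail G b) = enat m"
      by (cases "walk_dist G (head G a) (tail G b)") auto
    then have "walk_dist (line_digraph G) a b = enat (m + 1)"
      using walk_dist_line_digraph[OF a(1) b(1) \<open>a \<noteq> b\<close>] by (simp add: one_enat_def)
    then have "m + 1 \<le> inner_diameter (line_digraph G)"
      using a(1) b(1) by (intro walk_dist_le_inner_diameter) (simp_all add: finite_arcs)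
    moreover have "inner_diameter G \<le> m + 2"
      using walk_dist_tail_head_le[OF a(1) b(1)] a b uv(3) m by (simp add: numeral_eq_enat)
    ultimately show ?thesis by simp
  qed (use p in simp)
qed

end

theorem proposition2p3:
  fixes G :: "('a,'b) pre_digraph"
  assumes "fin_digraph G"
    and "arcs G \<noteq> {}"
  shows "int (inner_diameter G) - 1 \<le> int (inner_diameter (line_digraph G))
       \<and> inner_diameter (line_digraph G) \<le> inner_diameter G + 1"
  using fin_digraph.inner_diameter_le_line_digraph[OF assms]
    fin_digraph.inner_diameter_line_digraph_le[OF assms]
  by linarith

end
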